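(* Let $f(i)=\log_2(1+i)$ for $i\in\mathbb{N}$ and let $(n_k)_{k\ge1}$ be an increasing sequence of positive integers with $\sum_{k=1}^\infty \frac{1}{f(n_k)}<\frac1{10}$. Then there exists a $1$-unconditional norm $\|\cdot\|$ on $c_{00}$ which satisfies, for every $x\in c_{00}$, the implicit equation $$\|x\|=\max\Big\{\|x\|_{c_0},\Big(\sum_{k=1}^\infty \|x\|_{n_k}^2\Big)^{1/2}\Big\},\qquad\text{where}\qquad \|x\|_k=\max_{E_1<\cdots<E_k}\frac{1}{f(k)}\sum_{i=1}^k\|E_ix\|,$$ the maximum being over all $k$-tuples of subsets $E_1<\cdots<E_k$ of $\mathbb{N}$.
   Context: $c_{00}$ is the space of finitely supported real sequences on $\mathbb{N}$, with unit vector basis $(e_i)$. For $E,F\subseteq\mathbb{N}$, $E<F$ means $\max E<\min F$. For $x\in c_{00}$ and $E\subseteq\mathbb{N}$, $Ex$ denotes the restriction: $Ex(i)=x(i)$ if $i\in E$ and $0$ otherwise. $\|x\|_{c_0}=\max_i|x(i)|$. *)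

theory Defs
  imports "HOL-Analysis.Analysis"
begin

definition c00 :: "(nat \<Rightarrow> real) set" where
  "c00 = {x. finite {i. x i \<noteq> 0}}"

definition restr :: "nat set \<Rightarrow> (nat \<Rightarrow> real) \<Rightarrow> (nat \<Rightarrow> real)" where
  "restr E x = (\<lambda>i. if i \<in> E then x i else 0)"

definition c0_norm :: "(nat \<Rightarrow> real) \<Rightarrow> real" where
  "c0_norm x = Max {\<bar>x i\<bar> | i. True}"

definition flog :: "nat \<Rightarrow> real" where
  "flog i = log 2 (1 + real i)"

definition set_less :: "nat set \<Rightarrow> nat set \<Rightarrow> bool" where
  "set_less E F \<longleftrightarrow> Max E < Min F"

definition admissible :: "nat \<Rightarrow> (nat \<Rightarrow> nat set) \<Rightarrow> bool" where
  "admissible k Es \<longleftrightarrow> (\<forall>i<k. finite (Es i) \<and> Es i \<noteq> {}) \<and>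
      (\<forall>i. Suc i < k \<longrightarrow> set_less (Es i) (Es (Suc i)))"

definition k_norm :: "((nat \<Rightarrow> real) \<Rightarrow> real) \<Rightarrow> nat \<Rightarrow> (nat \<Rightarrow> real) \<Rightarrow> real" where
  "k_norm N k x = (SUP Es \<in> {Es. admissible k Es}. (1 / flog k) * (\<Sum>i<k. N (restr (Es i) x)))"

definition is_norm_c00 :: "((nat \<Rightarrow> real) \<Rightarrow> real) \<Rightarrow> bool" where
  "is_norm_c00 N \<longleftrightarrow>
     (\<forall>x\<in>c00. N x \<ge> 0) \<and>
     (\<forall>x\<in>c00. N x = 0 \<longleftrightarrow> x = (\<lambda>i. 0)) \<and>
     (\<forall>x\<in>c00. \<forall>c. N (\<lambda>i. c * x i) = \<bar>c\<bar> * N x) \<and>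
     (\<forall>x\<in>c00. \<forall>y\<in>c00. N (\<lambda>i. x i + y i) \<le> N x + N y)"

definition one_unconditional :: "((nat \<Rightarrow> real) \<Rightarrow> real) \<Rightarrow> bool" where
  "one_unconditional N \<longleftrightarrow>
     (\<forall>x\<in>c00. \<forall>\<epsilon>::nat \<Rightarrow> real. (\<forall>i. \<epsilon> i = 1 \<or> \<epsilon> i = -1) \<longrightarrow> N (\<lambda>i. \<epsilon> i * x i) = N x)"

end

theory Submission
  imports Defs
begin

text \<open>
  Start from the zero functional and iterate \<open>\<Phi>\<close>, the map sending \<open>N\<close> to the right-hand
  side of the implicit equation computed with \<open>N\<close>. The map \<open>\<Phi>\<close> is monotone and preserves
  subadditivity, sign invariance and domination by the \<open>\<ell>\<^sub>1\<close> norm: if \<open>N \<le> \<parallel>\<cdot>\<parallel>\<^sub>1\<close> then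
  \<open>\<parallel>x\<parallel>\<^sub>k \<le> \<parallel>x\<parallel>\<^sub>1 / f(k)\<close>, so \<open>\<Sum>\<^sub>k \<parallel>x\<parallel>\<^sub>n\<^sub>k\<^sup>2 \<le> \<parallel>x\<parallel>\<^sub>1\<^sup>2 \<Sum>\<^sub>k 1/f(n\<^sub>k) \<le> \<parallel>x\<parallel>\<^sub>1\<^sup>2\<close>.
  Hence the iterates increase pointwise to a limit, which inherits these properties.
  Each \<open>\<parallel>x\<parallel>\<^sub>k\<close> is a supremum of finite sums of values of \<open>N\<close>, so it passes to increasing
  pointwise limits and the limit is a fixed point of \<open>\<Phi>\<close>; the \<open>c\<^sub>0\<close> term of \<open>\<Phi>\<close> makes it
  definite.
\<close>

lemma c00_restr: "x \<in> c00 \<Longrightarrow> restr E x \<in> c00"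
  unfolding c00_def restr_def by (auto elim: rev_finite_subset)

lemma c00_add: "x \<in> c00 \<Longrightarrow> y \<in> c00 \<Longrightarrow> (\<lambda>i. x i + y i) \<in> c00"
proof -
  assume "x \<in> c00" "y \<in> c00"
  then have "finite ({i. x i \<noteq> 0} \<union> {i. y i \<noteq> 0})" unfolding c00_def by simp
  then show ?thesis unfolding c00_def mem_Collect_eq by (rule rev_finite_subset) auto
qed

lemma c00_mult: "x \<in> c00 \<Longrightarrow> (\<lambda>i. d i * x i) \<in> c00"
  unfolding c00_def by (auto elim: rev_finite_subset)

lemma restr_add: "restr E (\<lambda>i. x i + y i) = (\<lambda>i. restr E x i + restr E y i)"
  by (auto simp: restr_def fun_eq_iff)

lemma restr_mult: "restr E (\<lambda>i. d i * x i) = (\<lambda>i. d i * restr E x i)"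
  by (auto simp: restr_def fun_eq_iff)

definition l1_norm :: "(nat \<Rightarrow> real) \<Rightarrow> real" where
  "l1_norm x = (\<Sum>i\<in>{i. x i \<noteq> 0}. \<bar>x i\<bar>)"

lemma l1_norm_eq_sum:
  "x \<in> c00 \<Longrightarrow> finite S \<Longrightarrow> {i. x i \<noteq> 0} \<subseteq> S \<Longrightarrow> l1_norm x = (\<Sum>i\<in>S. \<bar>x i\<bar>)"
  unfolding l1_norm_def by (rule sum.mono_neutral_left) (auto simp: c00_def)

lemma l1_norm_nonneg: "0 \<le> l1_norm x"
  by (simp add: l1_norm_def sum_nonneg)

lemma abs_le_l1_norm:
  assumes x: "x \<in> c00" shows "\<bar>x i\<bar> \<le> l1_norm x"
proof -
  have fin: "finite (insert i {i. x i \<noteq> 0})" using x by (auto simp: c00_def)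
  have "\<bar>x i\<bar> \<le> (\<Sum>j\<in>insert i {i. x i \<noteq> 0}. \<bar>x j\<bar>)"
    by (rule member_le_sum) (use fin in auto)
  also have "\<dots> = l1_norm x" by (rule l1_norm_eq_sum[symmetric, OF x fin]) auto
  finally show ?thesis .
qed

lemma finite_abs_range: "x \<in> c00 \<Longrightarrow> finite {\<bar>x i\<bar> | i. True}"
proof -
  assume "x \<in> c00"
  then have "finite (insert 0 ((\<lambda>i. \<bar>x i\<bar>) ` {i. x i \<noteq> 0}))" by (simp add: c00_def)
  then show ?thesis by (rule rev_finite_subset) auto
qed

lemma abs_le_c0_norm: "x \<in> c00 \<Longrightarrow> \<bar>x i\<bar> \<le> c0_norm x"
  unfolding c0_norm_def by (rule Max_ge) (auto dest: finite_abs_range)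

lemma c0_norm_le: "x \<in> c00 \<Longrightarrow> (\<And>i. \<bar>x i\<bar> \<le> C) \<Longrightarrow> c0_norm x \<le> C"
  unfolding c0_norm_def by (subst Max_le_iff) (auto dest: finite_abs_range)

lemma c0_norm_nonneg: "x \<in> c00 \<Longrightarrow> 0 \<le> c0_norm x"
  using abs_le_c0_norm[of x 0] by simp

lemma c0_norm_le_l1_norm: "x \<in> c00 \<Longrightarrow> c0_norm x \<le> l1_norm x"
  by (rule c0_norm_le) (auto intro: abs_le_l1_norm)

lemma c0_norm_le_0_imp_zero: "x \<in> c00 \<Longrightarrow> c0_norm x \<le> 0 \<Longrightarrow> x = (\<lambda>i. 0)"
  using abs_le_c0_norm[of x] by (metis abs_le_zero_iff order_trans)

lemma c0_norm_add_le: "x \<in> c00 \<Longrightarrow> y \<in> c00 \<Longrightarrow> c0_norm (\<lambda>i. x i + y i) \<le> c0_norm x + c0_norm y"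
  by (rule c0_norm_le) (auto intro!: c00_add order_trans[OF abs_triangle_ineq] add_mono abs_le_c0_norm)

lemma c0_norm_mult_le:
  assumes x: "x \<in> c00" and d: "\<And>i. \<bar>d i\<bar> = c"
  shows "c0_norm (\<lambda>i. d i * x i) \<le> c * c0_norm x"
proof (rule c0_norm_le)
  show "(\<lambda>i. d i * x i) \<in> c00" using x by (rule c00_mult)
  fix i
  have "0 \<le> c" using d[of 0] by auto
  then show "\<bar>d i * x i\<bar> \<le> c * c0_norm x"
    using d[of i] abs_le_c0_norm[OF x, of i] by (simp add: abs_mult mult_left_mono)
qed

lemma admissible_Max_less_Min:
  "admissible k Es \<Longrightarrow> j < j' \<Longrightarrow> j' < k \<Longrightarrow> Max (Es j) < Min (Es j')"
proof (induction j' arbitrary: j)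
  case 0 then show ?case by simp
next
  case (Suc m)
  have step: "Max (Es m) < Min (Es (Suc m))"
    using Suc.prems unfolding admissible_def set_less_def by auto
  show ?case
  proof (cases "j = m")
    case False
    then have "Max (Es j) < Min (Es m)" using Suc by auto
    moreover have "Min (Es m) \<le> Max (Es m)" using Suc.prems unfolding admissible_def by auto
    ultimately show ?thesis using step by linarith
  qed (use step in simp)
qed

lemma admissible_disjoint:
  assumes adm: "admissible k Es" and "j < k" "j' < k" "i \<in> Es j" "i \<in> Es j'"
  shows "j = j'"
proof (rule ccontr)
  assume "j \<noteq> j'"
  then have "Max (Es j) < Min (Es j') \<or> Max (Es j') < Min (Es j)"
    using assms admissible_Max_less_Min[OF adm] by (cases "j < j'") auto
  moreover have "finite (Es j)" "finite (Es j')" using assms unfolding admissible_def by auto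
  ultimately show False using assms by (meson Max_ge Min_le le_less_trans not_le)
qed

lemma admissible_singletons: "admissible k (\<lambda>i. {i})"
  unfolding admissible_def set_less_def by auto

lemma sum_l1_norm_restr_le:
  assumes adm: "admissible k Es" and x: "x \<in> c00"
  shows "(\<Sum>j<k. l1_norm (restr (Es j) x)) \<le> l1_norm x"
proof -
  define S where "S = {i. x i \<noteq> 0}"
  have fS: "finite S" using x by (simp add: S_def c00_def)
  have "(\<Sum>j<k. l1_norm (restr (Es j) x)) = (\<Sum>j<k. \<Sum>i\<in>S. \<bar>restr (Es j) x i\<bar>)"
    by (intro sum.cong refl l1_norm_eq_sum c00_restr x fS) (auto simp: S_def restr_def)
  also have "\<dots> = (\<Sum>i\<in>S. \<Sum>j<k. \<bar>restr (Es j) x i\<bar>)" by (rule sum.swap)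
  also have "\<dots> \<le> (\<Sum>i\<in>S. \<bar>x i\<bar>)"
  proof (rule sum_mono)
    fix i
    have "card {j\<in>{..<k}. i \<in> Es j} \<le> Suc 0"
      by (subst card_le_Suc0_iff_eq) (auto intro: admissible_disjoint[OF adm])
    then have "real (card {j\<in>{..<k}. i \<in> Es j}) \<le> 1" by simp
    moreover have "(\<Sum>j<k. \<bar>restr (Es j) x i\<bar>) = \<bar>x i\<bar> * card {j\<in>{..<k}. i \<in> Es j}"
      by (simp add: restr_def sum.inter_filter[symmetric] if_distrib cong: if_cong)
    ultimately show "(\<Sum>j<k. \<bar>restr (Es j) x i\<bar>) \<le> \<bar>x i\<bar>"
      by (metis abs_ge_zero mult.right_neutral mult_left_mono)
  qed
  also have "\<dots> = l1_norm x" by (rule l1_norm_eq_sum[symmetric, OF x fS]) (simp add: S_def)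
  finally show ?thesis .
qed

lemma flog_ge_1: "0 < k \<Longrightarrow> 1 \<le> flog k"
  unfolding flog_def by (subst le_log_iff) auto

lemma flog_nonneg: "0 \<le> flog k"
  unfolding flog_def by simp

definition l1_dominated :: "((nat \<Rightarrow> real) \<Rightarrow> real) \<Rightarrow> bool" where
  "l1_dominated N \<longleftrightarrow> (\<forall>y\<in>c00. 0 \<le> N y \<and> N y \<le> l1_norm y)"

definition subadditive_c00 :: "((nat \<Rightarrow> real) \<Rightarrow> real) \<Rightarrow> bool" where
  "subadditive_c00 N \<longleftrightarrow> (\<forall>x\<in>c00. \<forall>y\<in>c00. N (\<lambda>i. x i + y i) \<le> N x + N y)"

text \<open>This single inequality yields both absolute homogeneity and 1-unconditionality.\<close>
definition modulus_scaling_le :: "((nat \<Rightarrow> real) \<Rightarrow> real) \<Rightarrow> bool" where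
  "modulus_scaling_le N \<longleftrightarrow>
     (\<forall>x\<in>c00. \<forall>d c. (\<forall>i. \<bar>d i\<bar> = c) \<longrightarrow> N (\<lambda>i. d i * x i) \<le> c * N x)"

lemma restr_sum_le_l1_norm:
  assumes "l1_dominated N" "x \<in> c00" "admissible k Es"
  shows "(1 / flog k) * (\<Sum>i<k. N (restr (Es i) x)) \<le> l1_norm x / flog k"
proof -
  have "(\<Sum>i<k. N (restr (Es i) x)) \<le> (\<Sum>i<k. l1_norm (restr (Es i) x))"
    using assms(1,2) by (intro sum_mono) (auto simp: l1_dominated_def c00_restr)
  also have "\<dots> \<le> l1_norm x" by (rule sum_l1_norm_restr_le[OF assms(3,2)])
  finally show ?thesis using flog_nonneg[of k] by (simp add: divide_right_mono)
qed

lemma k_norm_ge: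
  assumes "l1_dominated N" "x \<in> c00" "admissible k Es"
  shows "(1 / flog k) * (\<Sum>i<k. N (restr (Es i) x)) \<le> k_norm N k x"
  unfolding k_norm_def
proof (rule cSUP_upper)
  show "bdd_above ((\<lambda>Es. 1 / flog k * (\<Sum>i<k. N (restr (Es i) x))) ` {Es. admissible k Es})"
    using restr_sum_le_l1_norm[OF assms(1,2)] by (intro bdd_aboveI2) auto
qed (use assms in simp)

lemma k_norm_le:
  "(\<And>Es. admissible k Es \<Longrightarrow> (1 / flog k) * (\<Sum>i<k. N (restr (Es i) x)) \<le> C) \<Longrightarrow> k_norm N k x \<le> C"
  unfolding k_norm_def using admissible_singletons by (intro cSUP_least) auto

lemma k_norm_nonneg:
  assumes "l1_dominated N" "x \<in> c00"
  shows "0 \<le> k_norm N k x"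
proof -
  have "0 \<le> (1 / flog k) * (\<Sum>i<k. N (restr {i} x))"
    using assms by (intro mult_nonneg_nonneg sum_nonneg) (auto simp: l1_dominated_def c00_restr flog_nonneg)
  also have "\<dots> \<le> k_norm N k x" by (rule k_norm_ge[OF assms admissible_singletons])
  finally show ?thesis .
qed

lemma k_norm_le_l1_norm: "l1_dominated N \<Longrightarrow> x \<in> c00 \<Longrightarrow> k_norm N k x \<le> l1_norm x / flog k"
  by (intro k_norm_le restr_sum_le_l1_norm)

lemma k_norm_mono:
  assumes "l1_dominated M" "\<forall>y\<in>c00. N y \<le> M y" "x \<in> c00"
  shows "k_norm N k x \<le> k_norm M k x"
proof (rule k_norm_le)
  fix Es assume adm: "admissible k Es"
  have "(\<Sum>i<k. N (restr (Es i) x)) \<le> (\<Sum>i<k. M (restr (Es i) x))"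
    using assms by (intro sum_mono) (auto simp: c00_restr)
  then have "(1 / flog k) * (\<Sum>i<k. N (restr (Es i) x)) \<le> (1 / flog k) * (\<Sum>i<k. M (restr (Es i) x))"
    using flog_nonneg[of k] by (intro mult_left_mono) auto
  also have "\<dots> \<le> k_norm M k x" by (rule k_norm_ge[OF assms(1,3) adm])
  finally show "(1 / flog k) * (\<Sum>i<k. N (restr (Es i) x)) \<le> k_norm M k x" .
qed

lemma k_norm_add_le:
  assumes "l1_dominated N" "subadditive_c00 N" "x \<in> c00" "y \<in> c00"
  shows "k_norm N k (\<lambda>i. x i + y i) \<le> k_norm N k x + k_norm N k y"
proof (rule k_norm_le)
  fix Es assume adm: "admissible k Es"
  have "(\<Sum>i<k. N (restr (Es i) (\<lambda>i. x i + y i)))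
      \<le> (\<Sum>i<k. N (restr (Es i) x)) + (\<Sum>i<k. N (restr (Es i) y))"
    unfolding sum.distrib[symmetric] restr_add
    using assms(2-4) by (intro sum_mono) (auto simp: subadditive_c00_def c00_restr)
  then have "(1 / flog k) * (\<Sum>i<k. N (restr (Es i) (\<lambda>i. x i + y i)))
      \<le> (1 / flog k) * (\<Sum>i<k. N (restr (Es i) x)) + (1 / flog k) * (\<Sum>i<k. N (restr (Es i) y))"
    using flog_nonneg[of k] unfolding distrib_left[symmetric] by (intro mult_left_mono) auto
  also have "\<dots> \<le> k_norm N k x + k_norm N k y"
    by (intro add_mono k_norm_ge adm assms)
  finally show "(1 / flog k) * (\<Sum>i<k. N (restr (Es i) (\<lambda>i. x i + y i))) \<le> k_norm N k x + k_norm N k y" .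
qed

lemma k_norm_mult_le:
  assumes "l1_dominated N" "modulus_scaling_le N" "x \<in> c00" "\<And>i. \<bar>d i\<bar> = c"
  shows "k_norm N k (\<lambda>i. d i * x i) \<le> c * k_norm N k x"
proof (rule k_norm_le)
  fix Es assume adm: "admissible k Es"
  have c: "0 \<le> c" using assms(4)[of 0] by auto
  have "(\<Sum>i<k. N (restr (Es i) (\<lambda>i. d i * x i))) \<le> c * (\<Sum>i<k. N (restr (Es i) x))"
    unfolding sum_distrib_left restr_mult
    using assms(2-4) by (intro sum_mono) (auto simp: modulus_scaling_le_def c00_restr)
  then have "(1 / flog k) * (\<Sum>i<k. N (restr (Es i) (\<lambda>i. d i * x i)))
      \<le> c * ((1 / flog k) * (\<Sum>i<k. N (restr (Es i) x)))"
    using flog_nonneg[of k] by (simp add: mult_left_mono divide_right_mono)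
  also have "\<dots> \<le> c * k_norm N k x"
    by (intro mult_left_mono k_norm_ge adm assms c)
  finally show "(1 / flog k) * (\<Sum>i<k. N (restr (Es i) (\<lambda>i. d i * x i))) \<le> c * k_norm N k x" .
qed

lemma k_norm_le_of_tendsto:
  assumes dom: "\<And>m. l1_dominated (M m)" and x: "x \<in> c00"
    and lim: "\<And>y. y \<in> c00 \<Longrightarrow> (\<lambda>m. M m y) \<longlonglongrightarrow> N y"
    and bound: "\<And>m. k_norm (M m) k x \<le> C"
  shows "k_norm N k x \<le> C"
proof (rule k_norm_le)
  fix Es assume adm: "admissible k Es"
  have "(\<lambda>m. (1 / flog k) * (\<Sum>i<k. M m (restr (Es i) x)))
      \<longlonglongrightarrow> (1 / flog k) * (\<Sum>i<k. N (restr (Es i) x))"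
    by (intro tendsto_mult_left tendsto_sum lim c00_restr x)
  moreover have "(1 / flog k) * (\<Sum>i<k. M m (restr (Es i) x)) \<le> C" for m
    using k_norm_ge[OF dom x adm] bound by (rule order_trans)
  ultimately show "(1 / flog k) * (\<Sum>i<k. N (restr (Es i) x)) \<le> C"
    by (intro LIMSEQ_le_const2) auto
qed

lemma sqrt_suminf_sq_le_add:
  fixes a b c :: "nat \<Rightarrow> real"
  assumes sa: "summable (\<lambda>k. (a k)\<^sup>2)" and sb: "summable (\<lambda>k. (b k)\<^sup>2)"
    and sc: "summable (\<lambda>k. (c k)\<^sup>2)"
    and c_nonneg: "\<And>k. 0 \<le> c k" and c_le: "\<And>k. c k \<le> a k + b k"
  shows "sqrt (\<Sum>k. (c k)\<^sup>2) \<le> sqrt (\<Sum>k. (a k)\<^sup>2) + sqrt (\<Sum>k. (b k)\<^sup>2)"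
proof -
  let ?A = "sqrt (\<Sum>k. (a k)\<^sup>2)" and ?B = "sqrt (\<Sum>k. (b k)\<^sup>2)"
  have "(\<Sum>k. (c k)\<^sup>2) \<le> (?A + ?B)\<^sup>2"
  proof (rule suminf_le_const[OF sc])
    fix K
    have "(\<Sum>k<K. (c k)\<^sup>2) \<le> (\<Sum>k<K. (a k + b k)\<^sup>2)"
      using c_nonneg c_le by (intro sum_mono power_mono) auto
    also have "\<dots> = (L2_set (\<lambda>k. a k + b k) {..<K})\<^sup>2"
      unfolding L2_set_def by (simp add: sum_nonneg)
    also have "\<dots> \<le> (L2_set a {..<K} + L2_set b {..<K})\<^sup>2"
      by (intro power_mono L2_set_triangle_ineq L2_set_nonneg)
    also have "\<dots> \<le> (?A + ?B)\<^sup>2"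
      unfolding L2_set_def
      by (intro power_mono add_mono add_nonneg_nonneg real_sqrt_le_mono sum_le_suminf sa sb)
        (auto intro: sum_nonneg)
    finally show "(\<Sum>k<K. (c k)\<^sup>2) \<le> (?A + ?B)\<^sup>2" .
  qed
  then have "sqrt (\<Sum>k. (c k)\<^sup>2) \<le> sqrt ((?A + ?B)\<^sup>2)" by (rule real_sqrt_le_mono)
  also have "\<dots> = ?A + ?B" by (simp add: sa sb suminf_nonneg)
  finally show ?thesis .
qed

definition implicit_map ::
  "(nat \<Rightarrow> nat) \<Rightarrow> ((nat \<Rightarrow> real) \<Rightarrow> real) \<Rightarrow> (nat \<Rightarrow> real) \<Rightarrow> real" where
  "implicit_map n N x = max (c0_norm x) (sqrt (\<Sum>k. (k_norm N (n k) x)\<^sup>2))"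

lemma c0_norm_le_implicit_map: "c0_norm x \<le> implicit_map n N x"
  unfolding implicit_map_def by simp

text \<open>
  Only \<open>\<Sum>\<^sub>k 1/f(n\<^sub>k) \<le> 1\<close> is needed for existence.
\<close>
locale log_weights =
  fixes n :: "nat \<Rightarrow> nat"
  assumes n_pos: "\<And>k. 0 < n k"
    and summable_weights: "summable (\<lambda>k. 1 / flog (n k))"
    and suminf_weights_le_1: "(\<Sum>k. 1 / flog (n k)) \<le> 1"
begin

lemma k_norm_sq_le_weight:
  assumes "l1_dominated N" "x \<in> c00"
  shows "(k_norm N (n k) x)\<^sup>2 \<le> (l1_norm x)\<^sup>2 * (1 / flog (n k))"
proof -
  have flog: "1 \<le> flog (n k)" using flog_ge_1 n_pos by blast
  have "(k_norm N (n k) x)\<^sup>2 \<le> (l1_norm x / flog (n k))\<^sup>2"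
    by (intro power_mono k_norm_le_l1_norm k_norm_nonneg assms)
  also have "\<dots> = (l1_norm x)\<^sup>2 * (1 / flog (n k)) * (1 / flog (n k))"
    by (simp add: power2_eq_square)
  also have "\<dots> \<le> (l1_norm x)\<^sup>2 * (1 / flog (n k))"
    using flog by (intro mult_right_le_one_le mult_nonneg_nonneg) auto
  finally show ?thesis .
qed

lemma summable_k_norm_sq:
  assumes "l1_dominated N" "x \<in> c00"
  shows "summable (\<lambda>k. (k_norm N (n k) x)\<^sup>2)"
proof (rule summable_comparison_test'[where N = 0])
  show "summable (\<lambda>k. (l1_norm x)\<^sup>2 * (1 / flog (n k)))" by (intro summable_mult summable_weights)
  show "norm ((k_norm N (n k) x)\<^sup>2) \<le> (l1_norm x)\<^sup>2 * (1 / flog (n k))" for k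
    using k_norm_sq_le_weight[OF assms, of k] by simp
qed

lemma suminf_k_norm_sq_le:
  assumes "l1_dominated N" "x \<in> c00"
  shows "(\<Sum>k. (k_norm N (n k) x)\<^sup>2) \<le> (l1_norm x)\<^sup>2"
proof -
  have "(\<Sum>k. (k_norm N (n k) x)\<^sup>2) \<le> (\<Sum>k. (l1_norm x)\<^sup>2 * (1 / flog (n k)))"
    by (intro suminf_le summable_k_norm_sq summable_mult summable_weights k_norm_sq_le_weight assms)
  also have "\<dots> = (l1_norm x)\<^sup>2 * (\<Sum>k. 1 / flog (n k))" by (rule suminf_mult[OF summable_weights])
  also have "\<dots> \<le> (l1_norm x)\<^sup>2"
    by (intro mult_right_le_one_le suminf_weights_le_1 suminf_nonneg summable_weights)
      (auto simp: flog_nonneg)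
  finally show ?thesis .
qed

lemma implicit_map_l1_dominated:
  assumes "l1_dominated N" shows "l1_dominated (implicit_map n N)"
  unfolding l1_dominated_def implicit_map_def
proof
  fix y assume y: "y \<in> c00"
  have "sqrt (\<Sum>k. (k_norm N (n k) y)\<^sup>2) \<le> sqrt ((l1_norm y)\<^sup>2)"
    by (intro real_sqrt_le_mono suminf_k_norm_sq_le assms y)
  then show "0 \<le> max (c0_norm y) (sqrt (\<Sum>k. (k_norm N (n k) y)\<^sup>2)) \<and>
      max (c0_norm y) (sqrt (\<Sum>k. (k_norm N (n k) y)\<^sup>2)) \<le> l1_norm y"
    using c0_norm_le_l1_norm[OF y] c0_norm_nonneg[OF y] l1_norm_nonneg[of y] by simp
qed

lemma implicit_map_mono:
  assumes "l1_dominated N" "l1_dominated M" "\<forall>y\<in>c00. N y \<le> M y" "x \<in> c00"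
  shows "implicit_map n N x \<le> implicit_map n M x"
proof -
  have "(\<Sum>k. (k_norm N (n k) x)\<^sup>2) \<le> (\<Sum>k. (k_norm M (n k) x)\<^sup>2)"
    using assms by (intro suminf_le power_mono k_norm_mono k_norm_nonneg summable_k_norm_sq) auto
  then show ?thesis unfolding implicit_map_def by (intro max.mono real_sqrt_le_mono) auto
qed

lemma implicit_map_subadditive:
  assumes "l1_dominated N" "subadditive_c00 N"
  shows "subadditive_c00 (implicit_map n N)"
  unfolding subadditive_c00_def
proof (intro ballI)
  fix x y assume x: "x \<in> c00" and y: "y \<in> c00"
  have xy: "(\<lambda>i. x i + y i) \<in> c00" using x y by (rule c00_add)
  have "sqrt (\<Sum>k. (k_norm N (n k) (\<lambda>i. x i + y i))\<^sup>2)
      \<le> sqrt (\<Sum>k. (k_norm N (n k) x)\<^sup>2) + sqrt (\<Sum>k. (k_norm N (n k) y)\<^sup>2)"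
    by (intro sqrt_suminf_sq_le_add summable_k_norm_sq k_norm_nonneg k_norm_add_le assms x y xy)
  then show "implicit_map n N (\<lambda>i. x i + y i) \<le> implicit_map n N x + implicit_map n N y"
    using c0_norm_add_le[OF x y] unfolding implicit_map_def by linarith
qed

lemma implicit_map_modulus_scaling_le:
  assumes "l1_dominated N" "modulus_scaling_le N"
  shows "modulus_scaling_le (implicit_map n N)"
  unfolding modulus_scaling_le_def
proof (intro ballI allI impI)
  fix x and d :: "nat \<Rightarrow> real" and c :: real
  assume x: "x \<in> c00" and d: "\<forall>i. \<bar>d i\<bar> = c"
  have c: "0 \<le> c" using d by (metis abs_ge_zero)
  have dx: "(\<lambda>i. d i * x i) \<in> c00" using x by (rule c00_mult)
  have "(\<Sum>k. (k_norm N (n k) (\<lambda>i. d i * x i))\<^sup>2) \<le> (\<Sum>k. c\<^sup>2 * (k_norm N (n k) x)\<^sup>2)"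
    using d by (intro suminf_le summable_mult summable_k_norm_sq assms x dx)
      (auto simp: power_mult_distrib[symmetric] intro!: power_mono k_norm_nonneg k_norm_mult_le assms x dx)
  also have "\<dots> = c\<^sup>2 * (\<Sum>k. (k_norm N (n k) x)\<^sup>2)"
    by (intro suminf_mult summable_k_norm_sq assms x)
  finally have "sqrt (\<Sum>k. (k_norm N (n k) (\<lambda>i. d i * x i))\<^sup>2) \<le> c * sqrt (\<Sum>k. (k_norm N (n k) x)\<^sup>2)"
    using c by (metis real_sqrt_le_mono real_sqrt_mult real_sqrt_abs abs_of_nonneg)
  moreover have "c0_norm (\<lambda>i. d i * x i) \<le> c * c0_norm x" using d by (intro c0_norm_mult_le x) auto
  moreover have "c * c0_norm x \<le> c * implicit_map n N x"
    and "c * sqrt (\<Sum>k. (k_norm N (n k) x)\<^sup>2) \<le> c * implicit_map n N x"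
    using c unfolding implicit_map_def by (auto intro: mult_left_mono)
  ultimately show "implicit_map n N (\<lambda>i. d i * x i) \<le> c * implicit_map n N x"
    unfolding implicit_map_def by simp
qed

definition iterate :: "nat \<Rightarrow> (nat \<Rightarrow> real) \<Rightarrow> real" where
  "iterate m = (implicit_map n ^^ m) (\<lambda>_. 0)"

lemma iterate_0: "iterate 0 = (\<lambda>_. 0)"
  by (simp add: iterate_def)

lemma iterate_Suc: "iterate (Suc m) = implicit_map n (iterate m)"
  by (simp add: iterate_def)

lemma iterate_properties:
  "l1_dominated (iterate m) \<and> subadditive_c00 (iterate m) \<and> modulus_scaling_le (iterate m)"
proof (induction m)
  case 0 then show ?case
    by (simp add: iterate_0 l1_dominated_def subadditive_c00_def modulus_scaling_le_def l1_norm_nonneg)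
next
  case (Suc m) then show ?case
    by (simp add: iterate_Suc implicit_map_l1_dominated implicit_map_subadditive
        implicit_map_modulus_scaling_le)
qed

lemma iterate_l1_dominated: "l1_dominated (iterate m)"
  using iterate_properties by blast

lemma iterate_le_Suc: "\<forall>x\<in>c00. iterate m x \<le> iterate (Suc m) x"
proof (induction m)
  case 0 then show ?case using iterate_l1_dominated[of 1] by (simp add: iterate_0 l1_dominated_def)
next
  case (Suc m)
  have "implicit_map n (iterate m) x \<le> implicit_map n (iterate (Suc m)) x" if "x \<in> c00" for x
    using Suc.IH that by (intro implicit_map_mono iterate_l1_dominated) auto
  then show ?case by (simp add: iterate_Suc[of "Suc m"] iterate_Suc[of m])
qed

lemma incseq_iterate: "x \<in> c00 \<Longrightarrow> incseq (\<lambda>m. iterate m x)"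
  using iterate_le_Suc by (intro incseq_SucI) auto

lemma bdd_above_iterate: "x \<in> c00 \<Longrightarrow> bdd_above (range (\<lambda>m. iterate m x))"
  using iterate_l1_dominated by (intro bdd_aboveI2[where M = "l1_norm x"]) (auto simp: l1_dominated_def)

definition limit_norm :: "(nat \<Rightarrow> real) \<Rightarrow> real" where
  "limit_norm x = (SUP m. iterate m x)"

lemma iterate_tendsto_limit_norm: "x \<in> c00 \<Longrightarrow> (\<lambda>m. iterate m x) \<longlonglongrightarrow> limit_norm x"
  unfolding limit_norm_def by (intro LIMSEQ_incseq_SUP bdd_above_iterate incseq_iterate)

lemma iterate_le_limit_norm: "x \<in> c00 \<Longrightarrow> iterate m x \<le> limit_norm x"
  unfolding limit_norm_def by (intro cSUP_upper bdd_above_iterate) auto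

lemma limit_norm_le: "(\<And>m. iterate m x \<le> C) \<Longrightarrow> limit_norm x \<le> C"
  unfolding limit_norm_def by (intro cSUP_least) auto

lemma limit_norm_l1_dominated: "l1_dominated limit_norm"
  unfolding l1_dominated_def
proof
  fix y assume y: "y \<in> c00"
  have "0 \<le> limit_norm y" using iterate_le_limit_norm[OF y, of 0] by (simp add: iterate_0)
  moreover have "limit_norm y \<le> l1_norm y"
    using iterate_l1_dominated y by (intro limit_norm_le) (auto simp: l1_dominated_def)
  ultimately show "0 \<le> limit_norm y \<and> limit_norm y \<le> l1_norm y" ..
qed

lemma limit_norm_subadditive: "subadditive_c00 limit_norm"
  unfolding subadditive_c00_def
proof (intro ballI)
  fix x y assume x: "x \<in> c00" and y: "y \<in> c00"
  have "(\<lambda>m. iterate m (\<lambda>i. x i + y i)) \<longlonglongrightarrow> limit_norm (\<lambda>i. x i + y i)"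
    by (intro iterate_tendsto_limit_norm c00_add x y)
  moreover have "(\<lambda>m. iterate m x + iterate m y) \<longlonglongrightarrow> limit_norm x + limit_norm y"
    by (intro tendsto_add iterate_tendsto_limit_norm x y)
  moreover have "iterate m (\<lambda>i. x i + y i) \<le> iterate m x + iterate m y" for m
    using iterate_properties x y by (auto simp: subadditive_c00_def)
  ultimately show "limit_norm (\<lambda>i. x i + y i) \<le> limit_norm x + limit_norm y"
    by (intro LIMSEQ_le) auto
qed

lemma limit_norm_modulus_scaling_le: "modulus_scaling_le limit_norm"
  unfolding modulus_scaling_le_def
proof (intro ballI allI impI)
  fix x and d :: "nat \<Rightarrow> real" and c :: real
  assume x: "x \<in> c00" and d: "\<forall>i. \<bar>d i\<bar> = c"
  have "(\<lambda>m. iterate m (\<lambda>i. d i * x i)) \<longlonglongrightarrow> limit_norm (\<lambda>i. d i * x i)"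
    by (intro iterate_tendsto_limit_norm c00_mult x)
  moreover have "(\<lambda>m. c * iterate m x) \<longlonglongrightarrow> c * limit_norm x"
    by (intro tendsto_mult_left iterate_tendsto_limit_norm x)
  moreover have "iterate m (\<lambda>i. d i * x i) \<le> c * iterate m x" for m
    using iterate_properties x d by (auto simp: modulus_scaling_le_def)
  ultimately show "limit_norm (\<lambda>i. d i * x i) \<le> c * limit_norm x"
    by (intro LIMSEQ_le) auto
qed

lemma limit_norm_le_implicit_map: "x \<in> c00 \<Longrightarrow> limit_norm x \<le> implicit_map n limit_norm x"
proof (rule limit_norm_le)
  fix m assume x: "x \<in> c00"
  show "iterate m x \<le> implicit_map n limit_norm x"
  proof (cases m)
    case 0 then show ?thesis
      using implicit_map_l1_dominated[OF limit_norm_l1_dominated] x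
      by (simp add: iterate_0 l1_dominated_def)
  next
    case (Suc k) then show ?thesis
      by (simp add: iterate_Suc implicit_map_mono iterate_l1_dominated limit_norm_l1_dominated
          iterate_le_limit_norm x)
  qed
qed

text \<open>
  The \<open>k\<close>-th term for \<open>limit_norm\<close> is bounded by the limit of the \<open>k\<close>-th terms for the
  iterates, whose squares sum to at most \<open>iterate (Suc m) x\<^sup>2\<close>.
\<close>
lemma sum_k_norm_limit_norm_sq_le:
  assumes x: "x \<in> c00"
  shows "(\<Sum>k<K. (k_norm limit_norm (n k) x)\<^sup>2) \<le> (limit_norm x)\<^sup>2"
proof -
  define b where "b m k = k_norm (iterate m) (n k) x" for m k
  define L where "L k = (SUP m. b m k)" for k
  have b_bdd: "bdd_above (range (\<lambda>m. b m k))" for k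
    unfolding b_def using iterate_l1_dominated x
    by (intro bdd_aboveI2[where M = "l1_norm x / flog (n k)"] k_norm_le_l1_norm) auto
  have b_inc: "incseq (\<lambda>m. b m k)" for k
    unfolding b_def using iterate_le_Suc x
    by (intro incseq_SucI k_norm_mono iterate_l1_dominated) auto
  have b_lim: "(\<lambda>m. b m k) \<longlonglongrightarrow> L k" for k
    unfolding L_def by (intro LIMSEQ_incseq_SUP b_inc b_bdd)
  have b_le_L: "b m k \<le> L k" for m k
    unfolding L_def by (intro cSUP_upper b_bdd) simp
  have k_norm_le_L: "k_norm limit_norm (n k) x \<le> L k" for k
    by (rule k_norm_le_of_tendsto[OF iterate_l1_dominated x iterate_tendsto_limit_norm])
      (use b_le_L[unfolded b_def] in auto)
  have "(\<Sum>k<K. (k_norm limit_norm (n k) x)\<^sup>2) \<le> (\<Sum>k<K. (L k)\<^sup>2)"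
    by (intro sum_mono power_mono k_norm_le_L k_norm_nonneg limit_norm_l1_dominated x)
  also have "\<dots> \<le> (limit_norm x)\<^sup>2"
  proof (rule LIMSEQ_le_const2)
    show "(\<lambda>m. \<Sum>k<K. (b m k)\<^sup>2) \<longlonglongrightarrow> (\<Sum>k<K. (L k)\<^sup>2)"
      by (intro tendsto_sum tendsto_power b_lim)
    have "(\<Sum>k<K. (b m k)\<^sup>2) \<le> (limit_norm x)\<^sup>2" for m
    proof -
      have sm: "summable (\<lambda>k. (b m k)\<^sup>2)"
        unfolding b_def by (intro summable_k_norm_sq iterate_l1_dominated x)
      have "(\<Sum>k<K. (b m k)\<^sup>2) \<le> (\<Sum>k. (b m k)\<^sup>2)" by (intro sum_le_suminf sm) auto
      also have "\<dots> = (sqrt (\<Sum>k. (b m k)\<^sup>2))\<^sup>2" using sm by (simp add: suminf_nonneg)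
      also have "\<dots> \<le> (iterate (Suc m) x)\<^sup>2"
        unfolding iterate_Suc implicit_map_def b_def using sm[unfolded b_def]
        by (intro power_mono) (auto simp: suminf_nonneg)
      also have "\<dots> \<le> (limit_norm x)\<^sup>2"
        using iterate_l1_dominated[of "Suc m"] x
        by (intro power_mono iterate_le_limit_norm) (auto simp: l1_dominated_def)
      finally show ?thesis .
    qed
    then show "\<exists>M. \<forall>m\<ge>M. (\<Sum>k<K. (b m k)\<^sup>2) \<le> (limit_norm x)\<^sup>2" by blast
  qed
  finally show ?thesis .
qed

lemma implicit_map_limit_norm_le: "x \<in> c00 \<Longrightarrow> implicit_map n limit_norm x \<le> limit_norm x"
proof -
  assume x: "x \<in> c00"
  have "(\<Sum>k. (k_norm limit_norm (n k) x)\<^sup>2) \<le> (limit_norm x)\<^sup>2"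
    by (intro suminf_le_const summable_k_norm_sq limit_norm_l1_dominated x sum_k_norm_limit_norm_sq_le)
  then have "sqrt (\<Sum>k. (k_norm limit_norm (n k) x)\<^sup>2) \<le> limit_norm x"
    using limit_norm_l1_dominated x unfolding l1_dominated_def
    by (metis real_sqrt_le_mono real_sqrt_abs abs_of_nonneg)
  moreover have "c0_norm x \<le> limit_norm x"
    using c0_norm_le_implicit_map iterate_le_limit_norm[OF x, of 1] by (metis One_nat_def iterate_Suc order_trans)
  ultimately show ?thesis unfolding implicit_map_def by simp
qed

lemma limit_norm_fixed_point: "x \<in> c00 \<Longrightarrow> limit_norm x = implicit_map n limit_norm x"
  using limit_norm_le_implicit_map implicit_map_limit_norm_le by (meson order_antisym)

end

lemma modulus_scaling_le_homogeneous:
  assumes dom: "l1_dominated N" and sc: "modulus_scaling_le N" and x: "x \<in> c00"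
  shows "N (\<lambda>i. c * x i) = \<bar>c\<bar> * N x"
proof -
  have le: "N (\<lambda>i. c * y i) \<le> \<bar>c\<bar> * N y" if "y \<in> c00" for c y
    using sc that unfolding modulus_scaling_le_def by auto
  show ?thesis
  proof (cases "c = 0")
    case True then show ?thesis
      using le[OF x, of 0] dom c00_mult[OF x, of "\<lambda>_. 0"] by (force simp: l1_dominated_def)
  next
    case False
    have "\<bar>c\<bar> * N x = \<bar>c\<bar> * N (\<lambda>i. (1 / c) * (c * x i))" using False by simp
    also have "\<dots> \<le> \<bar>c\<bar> * (\<bar>1 / c\<bar> * N (\<lambda>i. c * x i))"
      by (intro mult_left_mono le c00_mult x) auto
    also have "\<dots> = N (\<lambda>i. c * x i)" using False by (simp add: abs_divide)
    finally show ?thesis using le[OF x, of c] by simp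
  qed
qed

lemma modulus_scaling_le_one_unconditional:
  assumes sc: "modulus_scaling_le N" shows "one_unconditional N"
  unfolding one_unconditional_def
proof (intro ballI allI impI)
  fix x and e :: "nat \<Rightarrow> real" assume x: "x \<in> c00" and e: "\<forall>i. e i = 1 \<or> e i = -1"
  have le: "N (\<lambda>i. e i * y i) \<le> N y" if "y \<in> c00" for y
    using sc[unfolded modulus_scaling_le_def, rule_format, OF that, of e 1] e
    by (metis abs_1 abs_minus_cancel mult_1)
  have "N x = N (\<lambda>i. e i * (e i * x i))" using e by (metis mult.assoc mult_1 mult_minus1 minus_minus)
  also have "\<dots> \<le> N (\<lambda>i. e i * x i)" by (rule le[OF c00_mult[OF x]])
  finally show "N (\<lambda>i. e i * x i) = N x" using le[OF x] by simp
qed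

lemma is_norm_c00I:
  assumes "l1_dominated N" "subadditive_c00 N" "modulus_scaling_le N"
    and c0: "\<And>x. x \<in> c00 \<Longrightarrow> c0_norm x \<le> N x"
  shows "is_norm_c00 N"
  unfolding is_norm_c00_def
proof (intro conjI ballI allI)
  fix x assume x: "x \<in> c00"
  show "0 \<le> N x" using assms(1) x by (simp add: l1_dominated_def)
  show "N (\<lambda>i. c * x i) = \<bar>c\<bar> * N x" for c by (rule modulus_scaling_le_homogeneous[OF assms(1,3) x])
  show "N x = 0 \<longleftrightarrow> x = (\<lambda>i. 0)"
    using c0[OF x] c0_norm_le_0_imp_zero[OF x] modulus_scaling_le_homogeneous[OF assms(1,3) x, of 0]
    by auto
qed (use assms(2) in \<open>simp add: subadditive_c00_def\<close>)

theorem proposition1p1: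
  fixes n :: "nat \<Rightarrow> nat"
  assumes "strict_mono n"
    and "\<forall>k. n k > 0"
    and "summable (\<lambda>k. 1 / flog (n k))"
    and "(\<Sum>k. 1 / flog (n k)) < 1 / 10"
  shows "\<exists>N. is_norm_c00 N \<and> one_unconditional N \<and>
           (\<forall>x\<in>c00. summable (\<lambda>k. (k_norm N (n k) x)\<^sup>2) \<and>
              N x = max (c0_norm x) (sqrt (\<Sum>k. (k_norm N (n k) x)\<^sup>2)))"
proof -
  interpret log_weights n using assms by unfold_locales auto
  have fixed_point: "limit_norm x = implicit_map n limit_norm x" if "x \<in> c00" for x
    using limit_norm_fixed_point[OF that] .
  have "is_norm_c00 limit_norm"
    using limit_norm_l1_dominated limit_norm_subadditive limit_norm_modulus_scaling_le
      fixed_point c0_norm_le_implicit_map by (intro is_norm_c00I) auto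
  moreover have "one_unconditional limit_norm"
    by (rule modulus_scaling_le_one_unconditional[OF limit_norm_modulus_scaling_le])
  moreover have "summable (\<lambda>k. (k_norm limit_norm (n k) x)\<^sup>2)" if "x \<in> c00" for x
    by (rule summable_k_norm_sq[OF limit_norm_l1_dominated that])
  ultimately show ?thesis using fixed_point unfolding implicit_map_def by blast
qed

end
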